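(* Consider MDVI$(\alpha,K,M)$ with any $\alpha\in[0,1)$ and positive integers $K,M$ on an MDP as in the context, and let $\delta\in(0,1)$. Let $\mathcal{E}_2$ be the event that $\|\varepsilon_k\|_\infty < 3H\sqrt{\iota_1/M}$ for all $k\in\{1,\dots,K\}$. Then $\mathbb{P}(\mathcal{E}_2^c)\leq\delta/4$.
   Context: MDP: finite state set $\mathcal{X}$, finite action set $\mathcal{A}$, discount $\gamma\in[0,1)$, reward $r\in[-1,1]^{\mathcal{X}\times\mathcal{A}}$, transition kernel $P(y|x,a)$, $H=1/(1-\gamma)$, $(Pv)(x,a)=\sum_y P(y|x,a)v(y)$. MDVI$(\alpha,K,M)$: $s_0 = 0$, $w_0=w_{-1}=0$; for $k=0,\dots,K-1$: $v_k = w_k-\alpha w_{k-1}$; for each $(x,a)$, independent samples $y_{k,m,x,a}\sim P(\cdot|x,a)$, $m\in[M]$; $q_{k+1}(x,a) = r(x,a)+\frac{\gamma}{M}\sum_m v_k(y_{k,m,x,a})$; $s_{k+1}=q_{k+1}+\alpha s_k$; $w_{k+1}(x)=\max_a s_{k+1}(x,a)$. Notation: $\widehat P_k v(x,a) = \frac1M\sum_m v(y_{k,m,x,a})$; $\varepsilon_k = \gamma\widehat P_{k-1}v_{k-1} - \gamma P v_{k-1}$ for $k\in[K]$; $\iota_1 = \log(8K|\mathcal{X}||\mathcal{A}|/\delta)$. *)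

theory Defs
  imports "HOL-Probability.Probability"
begin


(* Joint law of all samples: independent, y_{k,m,x,a} ~ P(.|x,a). *)
definition sample_pmf :: "('x::finite \<Rightarrow> 'a::finite \<Rightarrow> 'x pmf) \<Rightarrow> nat \<Rightarrow> nat
    \<Rightarrow> (nat \<times> nat \<times> 'x \<times> 'a \<Rightarrow> 'x) pmf" where
  "sample_pmf P K M = Pi_pmf ({0..<K} \<times> {0..<M} \<times> UNIV) undefined
      (\<lambda>(k, m, x, a). P x a)"

(* State of MDVI after k iterations: (s_k, w_k, w_{k-1}). *)
fun mdvi_state :: "real \<Rightarrow> real \<Rightarrow> ('x::finite \<Rightarrow> 'a::finite \<Rightarrow> real) \<Rightarrow> nat
    \<Rightarrow> (nat \<times> nat \<times> 'x \<times> 'a \<Rightarrow> 'x) \<Rightarrow> nat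
    \<Rightarrow> ('x \<Rightarrow> 'a \<Rightarrow> real) \<times> ('x \<Rightarrow> real) \<times> ('x \<Rightarrow> real)" where
  "mdvi_state \<alpha> \<gamma> r M \<omega> 0 = ((\<lambda>_ _. 0), (\<lambda>_. 0), (\<lambda>_. 0))"
| "mdvi_state \<alpha> \<gamma> r M \<omega> (Suc k) =
     (let (s, w, wp) = mdvi_state \<alpha> \<gamma> r M \<omega> k;
          v = (\<lambda>y. w y - \<alpha> * wp y);
          q = (\<lambda>x a. r x a + \<gamma> / real M * (\<Sum>m<M. v (\<omega> (k, m, x, a))));
          s' = (\<lambda>x a. q x a + \<alpha> * s x a);
          w' = (\<lambda>x. Max (range (\<lambda>a. s' x a)))
      in (s', w', w))"

definition mdvi_v :: "real \<Rightarrow> real \<Rightarrow> ('x::finite \<Rightarrow> 'a::finite \<Rightarrow> real) \<Rightarrow> nat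
    \<Rightarrow> (nat \<times> nat \<times> 'x \<times> 'a \<Rightarrow> 'x) \<Rightarrow> nat \<Rightarrow> 'x \<Rightarrow> real" where
  "mdvi_v \<alpha> \<gamma> r M \<omega> k y =
     (case mdvi_state \<alpha> \<gamma> r M \<omega> k of (s, w, wp) \<Rightarrow> w y - \<alpha> * wp y)"

definition emp_P :: "nat \<Rightarrow> (nat \<times> nat \<times> 'x \<times> 'a \<Rightarrow> 'x) \<Rightarrow> nat \<Rightarrow> ('x \<Rightarrow> real)
    \<Rightarrow> 'x \<Rightarrow> 'a \<Rightarrow> real" where
  "emp_P M \<omega> k v x a = (1 / real M) * (\<Sum>m<M. v (\<omega> (k, m, x, a)))"

definition trans_P :: "('x::finite \<Rightarrow> 'a \<Rightarrow> 'x pmf) \<Rightarrow> ('x \<Rightarrow> real) \<Rightarrow> 'x \<Rightarrow> 'a \<Rightarrow> real" where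
  "trans_P P v x a = (\<Sum>y\<in>UNIV. pmf (P x a) y * v y)"

definition mdvi_eps :: "real \<Rightarrow> real \<Rightarrow> ('x::finite \<Rightarrow> 'a::finite \<Rightarrow> real)
    \<Rightarrow> ('x \<Rightarrow> 'a \<Rightarrow> 'x pmf) \<Rightarrow> nat \<Rightarrow> (nat \<times> nat \<times> 'x \<times> 'a \<Rightarrow> 'x) \<Rightarrow> nat
    \<Rightarrow> 'x \<Rightarrow> 'a \<Rightarrow> real" where
  "mdvi_eps \<alpha> \<gamma> r P M \<omega> k x a =
     \<gamma> * emp_P M \<omega> (k - 1) (mdvi_v \<alpha> \<gamma> r M \<omega> (k - 1)) x a
     - \<gamma> * trans_P P (mdvi_v \<alpha> \<gamma> r M \<omega> (k - 1)) x a"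

definition sup_norm :: "('x::finite \<Rightarrow> 'a::finite \<Rightarrow> real) \<Rightarrow> real" where
  "sup_norm f = Max (range (\<lambda>(x, a). \<bar>f x a\<bar>))"

end

theory Submission
  imports Defs
begin

(* The iterates v_k = w_k - alpha w_(k-1) stay in [-H, H] with H = 1/(1-gamma), because
   w_(k+1) - alpha w_k = max_a (q_(k+1) + alpha s_k) - max_a (alpha s_k) and
   |q_(k+1)| <= 1 + gamma H = H. Since v_(k-1) depends only on the samples of the earlier rounds,
   conditioning on all samples except y_(k-1,m,x,a) (m < M) makes eps_k(x,a) equal to gamma/M
   times a centred sum of M independent variables with values in [-H, H]; Hoeffding's inequality
   bounds P(|eps_k(x,a)| >= t) by 2 exp(-M t^2 / (2 H^2)). A union bound over the K |X| |A|
   triples (k,x,a) at t = 3 H sqrt(iota_1/M) gives 2 K |X| |A| exp(-9 iota_1 / 2) <= delta/4. *)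

lemma measure_pmf_prob_bind_le:
  assumes "\<And>x. x \<in> set_pmf p \<Longrightarrow> measure_pmf.prob (N x) X \<le> c"
  shows "measure_pmf.prob (bind_pmf p N) X \<le> c"
proof -
  obtain x where "x \<in> set_pmf p" using set_pmf_not_empty by fast
  then have "0 \<le> c" using assms measure_nonneg order_trans by metis
  have "emeasure (bind_pmf p N) X = (\<integral>\<^sup>+x. emeasure (N x) X \<partial>p)" by simp
  also have "\<dots> \<le> ennreal c"
  proof (rule measure_pmf.nn_integral_le_const)
    show "AE x in p. emeasure (N x) X \<le> ennreal c"
      using assms by (intro AE_pmfI) (simp add: measure_pmf.emeasure_eq_measure ennreal_leI)
  qed (use \<open>0 \<le> c\<close> in simp)
  finally show ?thesis using \<open>0 \<le> c\<close> by (simp add: measure_pmf.emeasure_eq_measure)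
qed

lemma prob_Pi_pmf_union_le:
  assumes "finite A" "finite B" "A \<inter> B = {}"
    and "\<And>f. measure_pmf.prob (Pi_pmf B d Q) {g. (\<lambda>i. if i \<in> A then f i else g i) \<in> E} \<le> c"
  shows "measure_pmf.prob (Pi_pmf (A \<union> B) d Q) E \<le> c"
proof -
  have "Pi_pmf (A \<union> B) d Q = bind_pmf (Pi_pmf A d Q)
      (\<lambda>f. map_pmf (\<lambda>g i. if i \<in> A then f i else g i) (Pi_pmf B d Q))"
    unfolding Pi_pmf_union[OF assms(1-3)]
    by (simp add: pair_pmf_def map_bind_pmf map_pmf_def bind_assoc_pmf bind_return_pmf)
  then show ?thesis
    using assms(4) by (simp add: measure_pmf_prob_bind_le vimage_def)
qed

lemma Pi_pmf_sum_deviation_bound: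
  fixes v :: "'b \<Rightarrow> real" and c \<epsilon> :: real
  assumes "finite B" "B \<noteq> {}" "\<And>y. \<bar>v y\<bar> \<le> c" "0 < c" "0 \<le> \<epsilon>"
  shows "measure_pmf.prob (Pi_pmf B d Q)
           {g. \<epsilon> \<le> \<bar>\<Sum>i\<in>B. v (g i) - measure_pmf.expectation (Q i) v\<bar>}
         \<le> 2 * exp (- \<epsilon>\<^sup>2 / (2 * real (card B) * c\<^sup>2))"
proof -
  have expectation: "measure_pmf.expectation (Pi_pmf B d Q) (\<lambda>g. v (g i))
      = measure_pmf.expectation (Q i) v" if "i \<in> B" for i
  proof -
    have "measure_pmf.expectation (Pi_pmf B d Q) (\<lambda>g. v (g i))
        = measure_pmf.expectation (map_pmf (\<lambda>g. g i) (Pi_pmf B d Q)) v"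
      by simp
    also have "map_pmf (\<lambda>g. g i) (Pi_pmf B d Q) = Q i"
      unfolding Pi_pmf_component[OF assms(1)] using that by simp
    finally show ?thesis .
  qed
  interpret Hoeffding_ineq "measure_pmf (Pi_pmf B d Q)" B "\<lambda>i g. v (g i)" "\<lambda>_. - c" "\<lambda>_. c"
    "\<Sum>i\<in>B. measure_pmf.expectation (Q i) v"
  proof unfold_locales
    show "prob_space.indep_vars (measure_pmf (Pi_pmf B d Q)) (\<lambda>_. borel) (\<lambda>i g. v (g i)) B"
      using prob_space.indep_vars_compose2[OF measure_pmf.prob_space_axioms
          indep_vars_Pi_pmf[OF assms(1)], of "\<lambda>_. v" "\<lambda>_. borel"]
      by simp
    show "AE g in measure_pmf (Pi_pmf B d Q). v (g i) \<in> {- c..c}" for i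
      using assms(3) by (intro AE_I2) (metis abs_le_iff atLeastAtMost_iff minus_le_iff)
  qed (use assms(1) expectation in simp_all)
  have "(\<Sum>i\<in>B. (c - - c)\<^sup>2) = 4 * real (card B) * c\<^sup>2"
    by (simp add: power2_eq_square)
  moreover have "(\<Sum>i\<in>B. (c - - c)\<^sup>2) > 0"
    using assms(1,2,4) by (simp add: card_gt_0_iff)
  ultimately show ?thesis
    using Hoeffding_ineq_abs_ge[OF assms(5)] by (simp add: sum_subtractf power2_eq_square mult_ac)
qed

lemma abs_average_le:
  fixes f :: "nat \<Rightarrow> real"
  assumes "\<And>m. m < M \<Longrightarrow> \<bar>f m\<bar> \<le> c" "0 \<le> c"
  shows "\<bar>(\<Sum>m<M. f m) / real M\<bar> \<le> c"
proof (cases "M = 0")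
  case False
  have "\<bar>\<Sum>m<M. f m\<bar> \<le> (\<Sum>m<M. \<bar>f m\<bar>)"
    by (rule sum_abs)
  also have "\<dots> \<le> real M * c"
    using sum_bounded_above[of "{..<M}" "\<lambda>m. \<bar>f m\<bar>" c] assms(1) by simp
  finally have "\<bar>\<Sum>m<M. f m\<bar> \<le> real M * c" .
  then show ?thesis
    using False by (simp add: divide_le_eq mult.commute)
qed (use assms(2) in simp)

lemma abs_Max_range_add_sub_le:
  fixes f g :: "'a::finite \<Rightarrow> real"
  assumes "\<And>a. \<bar>f a\<bar> \<le> c"
  shows "\<bar>Max (range (\<lambda>a. f a + g a)) - Max (range g)\<bar> \<le> c"
proof -
  have "Max (range g) \<in> range g"
    by (rule Max_in) auto
  then obtain a0 where a0: "g a0 = Max (range g)"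
    by (metis rangeE)
  have "Max (range (\<lambda>a. f a + g a)) \<le> c + Max (range g)"
    using assms by (force intro: add_mono simp: abs_le_iff)
  moreover have "f a0 + g a0 \<le> Max (range (\<lambda>a. f a + g a))"
    by simp
  ultimately show ?thesis
    using assms[of a0] a0 by linarith
qed

lemma mdvi_state_cong:
  fixes \<omega> \<omega>' :: "nat \<times> nat \<times> 'x::finite \<times> 'a::finite \<Rightarrow> 'x"
  assumes "\<And>i m x a. i < k \<Longrightarrow> m < M \<Longrightarrow> \<omega> (i, m, x, a) = \<omega>' (i, m, x, a)"
  shows "mdvi_state \<alpha> \<gamma> r M \<omega> k = mdvi_state \<alpha> \<gamma> r M \<omega>' k"
  using assms
proof (induction k)
  case (Suc k)
  have state: "mdvi_state \<alpha> \<gamma> r M \<omega> k = mdvi_state \<alpha> \<gamma> r M \<omega>' k"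
    using Suc by simp
  have samples: "(\<Sum>m<M. v (\<omega> (k, m, x, a))) = (\<Sum>m<M. v (\<omega>' (k, m, x, a)))"
    for v :: "'x \<Rightarrow> real" and x a
    using Suc.prems by (intro sum.cong) auto
  show ?case by (simp add: state samples)
qed simp

lemma mdvi_v_cong:
  fixes \<omega> \<omega>' :: "nat \<times> nat \<times> 'x::finite \<times> 'a::finite \<Rightarrow> 'x"
  assumes "\<And>i m x a. i < k \<Longrightarrow> m < M \<Longrightarrow> \<omega> (i, m, x, a) = \<omega>' (i, m, x, a)"
  shows "mdvi_v \<alpha> \<gamma> r M \<omega> k = mdvi_v \<alpha> \<gamma> r M \<omega>' k"
proof -
  have "mdvi_state \<alpha> \<gamma> r M \<omega> k = mdvi_state \<alpha> \<gamma> r M \<omega>' k"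
    by (rule mdvi_state_cong) (rule assms)
  then show ?thesis
    by (simp add: mdvi_v_def fun_eq_iff)
qed

lemma mdvi_state_w_eq_Max:
  "case mdvi_state \<alpha> \<gamma> r M \<omega> k of (s, w, wp) \<Rightarrow> w = (\<lambda>x. Max (range (s x)))"
  by (cases k) (simp_all add: Let_def split: prod.split)

lemma abs_mdvi_v_le:
  fixes r :: "'x::finite \<Rightarrow> 'a::finite \<Rightarrow> real"
  assumes "0 \<le> \<gamma>" "\<gamma> < 1" "\<And>x a. \<bar>r x a\<bar> \<le> 1" "0 \<le> \<alpha>"
  shows "\<bar>mdvi_v \<alpha> \<gamma> r M \<omega> k y\<bar> \<le> 1 / (1 - \<gamma>)"
proof (induction k arbitrary: y)
  case 0
  show ?case using assms(2) by (simp add: mdvi_v_def)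
next
  case (Suc k)
  define H where "H = 1 / (1 - \<gamma>)"
  have "0 < H"
    using assms(2) by (simp add: H_def)
  define v where "v = mdvi_v \<alpha> \<gamma> r M \<omega> k"
  obtain s w wp where state: "mdvi_state \<alpha> \<gamma> r M \<omega> k = (s, w, wp)"
    by (metis prod_cases3)
  define q where "q x a = r x a + \<gamma> / real M * (\<Sum>m<M. v (\<omega> (k, m, x, a)))" for x a
  have q_bound: "\<bar>q x a\<bar> \<le> H" for x a
  proof -
    have "\<bar>(\<Sum>m<M. v (\<omega> (k, m, x, a))) / real M\<bar> \<le> H"
      using Suc.IH \<open>0 < H\<close> by (intro abs_average_le) (simp_all add: v_def H_def)
    then have "\<bar>\<gamma> / real M * (\<Sum>m<M. v (\<omega> (k, m, x, a)))\<bar> \<le> \<gamma> * H"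
      using assms(1) by (simp add: abs_mult mult_left_mono flip: times_divide_eq_right)
    moreover have "1 + \<gamma> * H = H"
      using assms(2) by (simp add: H_def field_simps)
    ultimately show ?thesis
      using assms(3)[of x a] abs_triangle_ineq unfolding q_def by (smt (verit))
  qed
  have "w x = Max (range (s x))" for x
    using mdvi_state_w_eq_Max[of \<alpha> \<gamma> r M \<omega> k] by (simp add: state)
  then have "\<alpha> * w x = Max (range (\<lambda>a. \<alpha> * s x a))" for x
    using assms(4) by (simp add: mono_Max_commute monoI mult_left_mono image_image)
  moreover have "v y = w y - \<alpha> * wp y" for y
    by (simp add: v_def mdvi_v_def state)
  ultimately have "mdvi_v \<alpha> \<gamma> r M \<omega> (Suc k) y
      = Max (range (\<lambda>a. q y a + \<alpha> * s y a)) - Max (range (\<lambda>a. \<alpha> * s y a))"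
    by (simp add: mdvi_v_def state q_def Let_def)
  then show ?case
    using abs_Max_range_add_sub_le[of "q y" H] q_bound by (simp add: H_def)
qed

lemma trans_P_eq_expectation:
  "trans_P P v x a = measure_pmf.expectation (P x a) v"
  by (simp add: trans_P_def integral_measure_pmf_real[of UNIV] mult.commute)

lemma sup_norm_attained:
  fixes f :: "'x::finite \<Rightarrow> 'a::finite \<Rightarrow> real"
  obtains x a where "sup_norm f = \<bar>f x a\<bar>"
proof -
  have "sup_norm f \<in> range (\<lambda>(x, a). \<bar>f x a\<bar>)"
    unfolding sup_norm_def by (rule Max_in) auto
  then show ?thesis
    using that by auto
qed

lemma mdvi_eps_Suc_eq:
  fixes r :: "'x::finite \<Rightarrow> 'a::finite \<Rightarrow> real" and \<omega> :: "nat \<times> nat \<times> 'x \<times> 'a \<Rightarrow> 'x"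
    and \<alpha> \<gamma> :: real and M j :: nat
  assumes "0 < M"
  defines "v \<equiv> mdvi_v \<alpha> \<gamma> r M \<omega> j"
  shows "mdvi_eps \<alpha> \<gamma> r P M \<omega> (Suc j) x a
    = \<gamma> / real M * (\<Sum>m<M. v (\<omega> (j, m, x, a)) - measure_pmf.expectation (P x a) v)"
  using assms(1)
  by (simp add: mdvi_eps_def emp_P_def trans_P_eq_expectation sum_subtractf v_def field_simps)

lemma prob_abs_mdvi_eps_ge:
  fixes P :: "'x::finite \<Rightarrow> 'a::finite \<Rightarrow> 'x pmf" and r :: "'x \<Rightarrow> 'a \<Rightarrow> real"
  assumes "0 \<le> \<gamma>" "\<gamma> < 1" "\<And>x a. \<bar>r x a\<bar> \<le> 1" "0 \<le> \<alpha>" "0 < M" "j < K" "0 \<le> t"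
  shows "measure_pmf.prob (sample_pmf P K M) {\<omega>. t \<le> \<bar>mdvi_eps \<alpha> \<gamma> r P M \<omega> (Suc j) x a\<bar>}
         \<le> 2 * exp (- (real M * t\<^sup>2) / (2 * (1 / (1 - \<gamma>))\<^sup>2))"
proof -
  define H where "H = 1 / (1 - \<gamma>)"
  define Q where "Q = (\<lambda>(k::nat, m::nat, x, a). P x a)"
  (* B indexes the M samples behind eps_(j+1)(x,a); v_j depends only on the samples in A. *)
  define B where "B = (\<lambda>m. (j, m, x, a)) ` {..<M}"
  define A where "A = {0..<K} \<times> {0..<M} \<times> UNIV - B"
  have "finite B" "B \<noteq> {}"
    using assms(5) by (auto simp: B_def)
  have sum_B: "(\<Sum>i\<in>B. u i) = (\<Sum>m<M. u (j, m, x, a))" for u :: "_ \<Rightarrow> real"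
    by (simp add: B_def sum.reindex inj_on_def)
  have "A \<union> B = {0..<K} \<times> {0..<M} \<times> UNIV"
    using assms(6) by (auto simp: A_def B_def)
  then have sample_pmf: "sample_pmf P K M = Pi_pmf (A \<union> B) undefined Q"
    by (simp add: sample_pmf_def Q_def)
  define merge where "merge f g = (\<lambda>i. if i \<in> A then f i else g i)"
    for f g :: "nat \<times> nat \<times> 'x \<times> 'a \<Rightarrow> 'x"
  have conditional: "measure_pmf.prob (Pi_pmf B undefined Q)
      {g. t \<le> \<bar>mdvi_eps \<alpha> \<gamma> r P M (merge f g) (Suc j) x a\<bar>}
      \<le> 2 * exp (- (real M * t\<^sup>2) / (2 * H\<^sup>2))" for f
  proof -
    define v where "v = mdvi_v \<alpha> \<gamma> r M f j"
    define deviation where "deviation g = (\<Sum>i\<in>B. v (g i) - measure_pmf.expectation (Q i) v)"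
      for g
    have "mdvi_v \<alpha> \<gamma> r M (merge f g) j = v" for g
      unfolding v_def by (rule mdvi_v_cong) (use assms(6) in \<open>auto simp: merge_def A_def B_def\<close>)
    moreover have "deviation g = (\<Sum>i\<in>B. v (merge f g i) - measure_pmf.expectation (Q i) v)" for g
      unfolding deviation_def by (rule sum.cong) (simp_all add: merge_def A_def)
    ultimately have eps: "mdvi_eps \<alpha> \<gamma> r P M (merge f g) (Suc j) x a = \<gamma> / real M * deviation g"
      for g
      using mdvi_eps_Suc_eq[OF assms(5), where \<omega>="merge f g" and j=j and P=P and x=x and a=a
          and \<alpha>=\<alpha> and \<gamma>=\<gamma> and r=r]
        sum_B[of "\<lambda>i. v (merge f g i) - measure_pmf.expectation (Q i) v"]
      by (simp add: Q_def)
    have "real M * t \<le> \<bar>deviation g\<bar>"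
      if "t \<le> \<bar>mdvi_eps \<alpha> \<gamma> r P M (merge f g) (Suc j) x a\<bar>" for g
    proof -
      have "real M * t \<le> \<gamma> * \<bar>deviation g\<bar>"
        using mult_left_mono[OF that, of "real M"] eps[of g] assms(1,5) by (simp add: abs_mult)
      also have "\<dots> \<le> \<bar>deviation g\<bar>"
        using assms(1,2) by (simp add: mult_left_le_one_le)
      finally show ?thesis .
    qed
    then have "measure_pmf.prob (Pi_pmf B undefined Q)
        {g. t \<le> \<bar>mdvi_eps \<alpha> \<gamma> r P M (merge f g) (Suc j) x a\<bar>}
        \<le> measure_pmf.prob (Pi_pmf B undefined Q) {g. real M * t \<le> \<bar>deviation g\<bar>}"
      by (intro measure_pmf.finite_measure_mono) auto
    also have "\<dots> \<le> 2 * exp (- (real M * t)\<^sup>2 / (2 * real (card B) * H\<^sup>2))"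
      unfolding deviation_def
      using abs_mdvi_v_le[OF assms(1-4)] assms(2,5,7)
      by (intro Pi_pmf_sum_deviation_bound \<open>finite B\<close> \<open>B \<noteq> {}\<close>) (simp_all add: v_def H_def)
    also have "\<dots> = 2 * exp (- (real M * t\<^sup>2) / (2 * H\<^sup>2))"
      using assms(5) by (simp add: B_def card_image inj_on_def power2_eq_square)
    finally show ?thesis .
  qed
  have "finite A" "A \<inter> B = {}"
    by (auto simp: A_def)
  then show ?thesis
    unfolding sample_pmf H_def[symmetric] using conditional \<open>finite B\<close>
    by (intro prob_Pi_pmf_union_le) (simp_all add: merge_def)
qed

lemma prob_mdvi_eps_sup_norm_ge:
  fixes P :: "'x::finite \<Rightarrow> 'a::finite \<Rightarrow> 'x pmf" and r :: "'x \<Rightarrow> 'a \<Rightarrow> real"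
  assumes "0 \<le> \<gamma>" "\<gamma> < 1" "\<And>x a. \<bar>r x a\<bar> \<le> 1" "0 \<le> \<alpha>" "0 < M" "0 \<le> t"
  shows "measure_pmf.prob (sample_pmf P K M)
           (- {\<omega>. \<forall>k\<in>{1..K}. sup_norm (mdvi_eps \<alpha> \<gamma> r P M \<omega> k) < t})
         \<le> real K * real CARD('x) * real CARD('a)
            * (2 * exp (- (real M * t\<^sup>2) / (2 * (1 / (1 - \<gamma>))\<^sup>2)))"
proof -
  define E where "E = (\<lambda>(j, x, a). {\<omega>. t \<le> \<bar>mdvi_eps \<alpha> \<gamma> r P M \<omega> (Suc j) x a\<bar>})"
  define S where "S = {..<K} \<times> (UNIV :: ('x \<times> 'a) set)"
  have "- {\<omega>. \<forall>k\<in>{1..K}. sup_norm (mdvi_eps \<alpha> \<gamma> r P M \<omega> k) < t} \<subseteq> (\<Union>i\<in>S. E i)"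
  proof
    fix \<omega> assume "\<omega> \<in> - {\<omega>. \<forall>k\<in>{1..K}. sup_norm (mdvi_eps \<alpha> \<gamma> r P M \<omega> k) < t}"
    then obtain j where "j < K" "t \<le> sup_norm (mdvi_eps \<alpha> \<gamma> r P M \<omega> (Suc j))"
      by (auto simp: not_less) (metis Suc_le_D Suc_le_lessD)
    moreover obtain x a
      where "sup_norm (mdvi_eps \<alpha> \<gamma> r P M \<omega> (Suc j)) = \<bar>mdvi_eps \<alpha> \<gamma> r P M \<omega> (Suc j) x a\<bar>"
      by (rule sup_norm_attained)
    ultimately show "\<omega> \<in> (\<Union>i\<in>S. E i)"
      by (auto simp: E_def S_def)
  qed
  then have "measure_pmf.prob (sample_pmf P K M)
      (- {\<omega>. \<forall>k\<in>{1..K}. sup_norm (mdvi_eps \<alpha> \<gamma> r P M \<omega> k) < t})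
      \<le> measure_pmf.prob (sample_pmf P K M) (\<Union>i\<in>S. E i)"
    by (simp add: measure_pmf.finite_measure_mono)
  also have "\<dots> \<le> (\<Sum>i\<in>S. measure_pmf.prob (sample_pmf P K M) (E i))"
    by (rule measure_pmf.finite_measure_subadditive_finite) (auto simp: S_def)
  also have "\<dots> \<le> (\<Sum>i\<in>S. 2 * exp (- (real M * t\<^sup>2) / (2 * (1 / (1 - \<gamma>))\<^sup>2)))"
    using prob_abs_mdvi_eps_ge[OF assms(1-5) _ assms(6)]
    by (intro sum_mono) (auto simp: S_def E_def)
  also have "\<dots> = real K * real CARD('x) * real CARD('a)
      * (2 * exp (- (real M * t\<^sup>2) / (2 * (1 / (1 - \<gamma>))\<^sup>2)))"
    by (simp add: S_def card_cartesian_product)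
  finally show ?thesis .
qed

theorem lemma5:
  fixes P :: "'x::finite \<Rightarrow> 'a::finite \<Rightarrow> 'x pmf"
    and r :: "'x \<Rightarrow> 'a \<Rightarrow> real"
    and \<gamma> \<alpha> \<delta> :: real and K M :: nat
  assumes "0 \<le> \<gamma>" "\<gamma> < 1"
    and "\<And>x a. r x a \<in> {-1..1}"
    and "0 \<le> \<alpha>" "\<alpha> < 1"
    and "K > 0" "M > 0"
    and "0 < \<delta>" "\<delta> < 1"
  shows "measure_pmf.prob (sample_pmf P K M)
           (- {\<omega>. \<forall>k\<in>{1..K}. sup_norm (mdvi_eps \<alpha> \<gamma> r P M \<omega> k)
                 < 3 * (1 / (1 - \<gamma>)) * sqrt (ln (8 * real K * real CARD('x) * real CARD('a) / \<delta>) / real M)})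
         \<le> \<delta> / 4"
proof -
  define H where "H = 1 / (1 - \<gamma>)"
  define N where "N = real K * real CARD('x) * real CARD('a)"
  define \<iota> where "\<iota> = ln (8 * N / \<delta>)"
  have "0 < H"
    using assms(2) by (simp add: H_def)
  have "1 \<le> K * CARD('x) * CARD('a)"
    using assms(6) by (simp add: Suc_le_eq)
  then have "1 \<le> N"
    unfolding N_def by (metis of_nat_1 of_nat_le_iff of_nat_mult)
  then have "0 \<le> \<iota>" "exp (- \<iota>) = \<delta> / (8 * N)"
    using assms(8,9) by (simp_all add: \<iota>_def exp_minus field_simps)
  define t where "t = 3 * H * sqrt (\<iota> / real M)"
  have exponent: "- (real M * t\<^sup>2) / (2 * H\<^sup>2) = - (9 / 2 * \<iota>)"
    using assms(7) \<open>0 < H\<close> \<open>0 \<le> \<iota>\<close> by (simp add: t_def field_simps)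
  have "N * (2 * exp (- (real M * t\<^sup>2) / (2 * H\<^sup>2))) \<le> N * (2 * exp (- \<iota>))"
    unfolding exponent using \<open>0 \<le> \<iota>\<close> \<open>1 \<le> N\<close> by simp
  also have "\<dots> = \<delta> / 4"
    using \<open>exp (- \<iota>) = \<delta> / (8 * N)\<close> \<open>1 \<le> N\<close> by simp
  finally show ?thesis
    using prob_mdvi_eps_sup_norm_ge[OF assms(1,2) _ assms(4,7), of r t P K]
      assms(3) \<open>0 < H\<close> \<open>0 \<le> \<iota>\<close>
    by (simp add: abs_le_iff t_def H_def N_def \<iota>_def mult.assoc)
qed

end
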